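(* For the sequences $a_n=n+1$ $(n\ge0)$ and $a_n=(n+1)^2$ $(n\ge0)$, the polynomial $p_n(x)=\sum_{i=0}^n a_ix^i$ has exactly $n\bmod 2$ real roots, counted with multiplicity, for every $n\ge0$ (i.e., no real root if $n$ is even and exactly one if $n$ is odd). *)

theory Defs
  imports "HOL-Computational_Algebra.Polynomial"
begin

definition partial_poly :: "(nat \<Rightarrow> real) \<Rightarrow> nat \<Rightarrow> real poly" where
  "partial_poly a n = (\<Sum>i\<le>n. monom (a i) i)"

text \<open>Number of real roots counted with multiplicity (for nonzero p).\<close>
definition real_root_count :: "real poly \<Rightarrow> nat" where
  "real_root_count p = (\<Sum>x\<in>{x. poly p x = 0}. order x p)"

end

theory Submission
  imports Defs
begin

text \<open>Multiplying \<open>p\<^sub>n\<close> by \<open>(1 - x)\<^sup>2\<close>, resp. \<open>(1 - x)\<^sup>3\<close>, telescopes it into a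
  polynomial \<open>F\<close> with only four, resp. five, terms. Positive coefficients rule out roots in
  \<open>x \<ge> 0\<close>. For \<open>x < 0\<close> the signs of the powers of \<open>x\<close> decide everything: for even \<open>n\<close>
  they make \<open>F\<close> positive, while for odd \<open>n\<close> they make \<open>F'\<close> positive, so
  \<open>F\<close> increases from \<open>F (-1) < 0\<close> to \<open>F 0 = 1\<close> and has exactly one negative root, which is
  simple because \<open>F'\<close> does not vanish there.\<close>

lemma real_root_count_eq_0:
  assumes "\<And>x. poly p x \<noteq> 0"
  shows "real_root_count p = 0"
proof -
  have "{x. poly p x = 0} = {}" using assms by blast
  then show ?thesis by (simp add: real_root_count_def)
qed

lemma real_root_count_eq_1:
  assumes roots: "{x. poly p x = 0} = {r}" and simple: "poly (pderiv p) r \<noteq> 0"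
  shows "real_root_count p = 1"
proof -
  have "p \<noteq> 0" using simple by auto
  moreover have "poly p r = 0" using roots by blast
  moreover have "order r (pderiv p) = 0" using simple order_root by blast
  ultimately have "order r p = 1" using order_pderiv[of p r] by simp
  then show ?thesis using roots by (simp add: real_root_count_def)
qed

lemma poly_partial_poly: "poly (partial_poly a n) x = (\<Sum>i\<le>n. a i * x ^ i)"
  by (simp add: partial_poly_def poly_sum poly_monom)

lemma poly_partial_poly_pos:
  assumes "\<And>i. a i \<ge> 0" and "a 0 > 0" and "(x::real) \<ge> 0"
  shows "poly (partial_poly a n) x > 0"
proof -
  have "(\<Sum>i\<le>n. a i * x ^ i) = a 0 + (\<Sum>i\<in>{1..n}. a i * x ^ i)"
    by (simp add: atMost_atLeast0 sum.atLeast_Suc_atMost)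
  moreover have "(\<Sum>i\<in>{1..n}. a i * x ^ i) \<ge> 0"
    using assms by (intro sum_nonneg) auto
  ultimately show ?thesis using assms by (simp add: poly_partial_poly)
qed

lemma DERIV_one_minus_power_mult_poly_at_root:
  fixes p :: "real poly"
  assumes "poly p r = 0"
  shows "((\<lambda>x. (1 - x) ^ k * poly p x) has_real_derivative (1 - r) ^ k * poly (pderiv p) r) (at r)"
proof -
  have "((\<lambda>x. (1 - x) ^ k * poly p x) has_real_derivative
      - (real k * (1 - r) ^ (k - 1)) * poly p r + (1 - r) ^ k * poly (pderiv p) r) (at r)"
    by (rule derivative_eq_intros refl poly_DERIV)+ simp
  then show ?thesis using assms by simp
qed

lemma real_root_count_eq_0_by_multiplier:
  fixes p :: "real poly"
  assumes F: "\<And>x. (1 - x) ^ k * poly p x = F x"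
    and pos_nonneg: "\<And>x. x \<ge> 0 \<Longrightarrow> poly p x > 0"
    and F_pos_neg: "\<And>x. x < 0 \<Longrightarrow> F x > 0"
  shows "real_root_count p = 0"
proof (rule real_root_count_eq_0)
  fix x
  show "poly p x \<noteq> 0"
    using pos_nonneg[of x] F_pos_neg[of x] F[of x] by (cases "x \<ge> 0") auto
qed

lemma real_root_count_eq_1_by_multiplier:
  fixes p :: "real poly"
  assumes F: "\<And>x. (1 - x) ^ k * poly p x = F x"
    and F': "\<And>x. (F has_real_derivative F' x) (at x)"
    and F'_pos_neg: "\<And>x. x < 0 \<Longrightarrow> F' x > 0"
    and pos_nonneg: "\<And>x. x \<ge> 0 \<Longrightarrow> poly p x > 0"
    and F_neg: "F (-1) < 0"
  shows "real_root_count p = 1"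
proof -
  have F_0: "F 0 > 0" using pos_nonneg[of 0] F[of 0] by simp
  have "\<forall>x. -1 \<le> x \<and> x \<le> 0 \<longrightarrow> isCont F x" using F' DERIV_isCont by blast
  then obtain r where r: "-1 \<le> r" "r \<le> 0" "F r = 0"
    using IVT[of F "-1" 0 0] F_neg F_0 by auto
  have r_neg: "r < 0" using r F_0 by (cases "r = 0") auto
  have F_strict_mono: "F a < F b" if "a < b" "b < 0" for a b
  proof (rule DERIV_pos_imp_increasing[OF \<open>a < b\<close>])
    fix x assume "a \<le> x" "x \<le> b"
    then show "\<exists>y. (F has_real_derivative y) (at x) \<and> 0 < y"
      using that F' F'_pos_neg by (meson le_less_trans)
  qed
  have neg_if_root: "x < 0" if "poly p x = 0" for x
    using pos_nonneg[of x] that by (cases "x \<ge> 0") auto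
  have "s = r" if "poly p s = 0" for s
  proof -
    have "s < 0" "F s = 0" using neg_if_root[OF that] F[of s] that by simp_all
    then show ?thesis
      using F_strict_mono[of s r] F_strict_mono[of r s] r_neg \<open>F r = 0\<close>
      by (cases s r rule: linorder_cases) simp_all
  qed
  moreover have p_r: "poly p r = 0" using F[of r] r r_neg by simp
  ultimately have roots: "{x. poly p x = 0} = {r}" by blast
  have "F = (\<lambda>x. (1 - x) ^ k * poly p x)" using F by simp
  then have "F' r = (1 - r) ^ k * poly (pderiv p) r"
    using DERIV_unique[OF F'[of r]] DERIV_one_minus_power_mult_poly_at_root[OF p_r] by simp
  then have "poly (pderiv p) r \<noteq> 0" using F'_pos_neg[OF r_neg] by auto
  with roots show ?thesis by (rule real_root_count_eq_1)
qed

lemma one_minus_sq_mult_poly_partial_poly_linear: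
  "(1 - x) ^ 2 * poly (partial_poly (\<lambda>i. real i + 1) n) x
     = 1 - (real n + 2) * x ^ (n + 1) + (real n + 1) * x ^ (n + 2)"
  unfolding poly_partial_poly
  by (induction n) (simp_all add: algebra_simps power2_eq_square)

lemma one_minus_cube_mult_poly_partial_poly_square:
  "(1 - x) ^ 3 * poly (partial_poly (\<lambda>i. (real i + 1) ^ 2) n) x
     = 1 + x - (real n + 2) ^ 2 * x ^ (n + 1)
       + (2 * (real n) ^ 2 + 6 * real n + 3) * x ^ (n + 2) - (real n + 1) ^ 2 * x ^ (n + 3)"
  unfolding poly_partial_poly
proof (induction n)
  case 0
  then show ?case by (simp add: algebra_simps power2_eq_square power3_eq_cube)
next
  case (Suc n)
  have "(1 - x) ^ 3 * (\<Sum>i\<le>Suc n. (real i + 1) ^ 2 * x ^ i)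
      = (1 - x) ^ 3 * (\<Sum>i\<le>n. (real i + 1) ^ 2 * x ^ i) + (1 - x) ^ 3 * (real n + 2) ^ 2 * x ^ (n + 1)"
    by (simp add: algebra_simps)
  also have "\<dots> = 1 + x - (real n + 2) ^ 2 * x ^ (n + 1)
      + (2 * (real n) ^ 2 + 6 * real n + 3) * x ^ (n + 2) - (real n + 1) ^ 2 * x ^ (n + 3)
      + (1 - x) ^ 3 * (real n + 2) ^ 2 * x ^ (n + 1)"
    using Suc by simp
  also have "\<dots> = 1 + x - (real (Suc n) + 2) ^ 2 * x ^ (Suc n + 1)
      + (2 * (real (Suc n)) ^ 2 + 6 * real (Suc n) + 3) * x ^ (Suc n + 2)
      - (real (Suc n) + 1) ^ 2 * x ^ (Suc n + 3)"
    by (simp add: algebra_simps power2_eq_square power3_eq_cube power_add power4_eq_xxxx)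
  finally show ?case .
qed

lemma real_root_count_partial_poly_linear:
  "real_root_count (partial_poly (\<lambda>i. real i + 1) n) = n mod 2"
proof -
  let ?p = "partial_poly (\<lambda>i. real i + 1) n"
  define F where "F x = 1 - (real n + 2) * x ^ (n + 1) + (real n + 1) * x ^ (n + 2)" for x :: real
  have F: "(1 - x) ^ 2 * poly ?p x = F x" for x
    unfolding F_def by (rule one_minus_sq_mult_poly_partial_poly_linear)
  have pos_nonneg: "x \<ge> 0 \<Longrightarrow> poly ?p x > 0" for x
    by (rule poly_partial_poly_pos) auto
  show ?thesis
  proof (cases "even n")
    case True
    have "F x > 0" if "x < 0" for x
    proof -
      have "x ^ (n + 1) < 0" "x ^ (n + 2) > 0"
        unfolding power_less_zero_eq zero_less_power_eq using that True by simp_all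
      then have "(real n + 2) * x ^ (n + 1) < 0" "(real n + 1) * x ^ (n + 2) > 0"
        by (simp_all add: mult_pos_neg)
      then show ?thesis unfolding F_def by linarith
    qed
    then show ?thesis using real_root_count_eq_0_by_multiplier[OF F pos_nonneg] True by simp
  next
    case False
    define F' where "F' x = (real n + 1) * (real n + 2) * (x ^ (n + 1) - x ^ n)" for x :: real
    have F': "(F has_real_derivative F' x) (at x)" for x
      unfolding F_def[abs_def] F'_def
      by (rule derivative_eq_intros refl)+ (simp add: algebra_simps)
    have "F' x > 0" if "x < 0" for x
    proof -
      have "x ^ (n + 1) > 0" "x ^ n < 0"
        unfolding power_less_zero_eq zero_less_power_eq using that False by simp_all
      then show ?thesis unfolding F'_def by simp
    qed
    moreover have "F (-1) < 0" using False unfolding F_def by simp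
    ultimately show ?thesis
      using real_root_count_eq_1_by_multiplier[OF F F' _ pos_nonneg] False
      by (simp add: odd_iff_mod_2_eq_one)
  qed
qed

lemma real_root_count_partial_poly_square:
  "real_root_count (partial_poly (\<lambda>i. (real i + 1) ^ 2) n) = n mod 2"
proof -
  let ?p = "partial_poly (\<lambda>i. (real i + 1) ^ 2) n"
  define c where "c = 2 * (real n) ^ 2 + 6 * real n + 3"
  have c_pos: "c > 0" unfolding c_def by (simp add: add_nonneg_pos)
  define F where "F x = 1 + x - (real n + 2) ^ 2 * x ^ (n + 1)
      + c * x ^ (n + 2) - (real n + 1) ^ 2 * x ^ (n + 3)" for x :: real
  have F: "(1 - x) ^ 3 * poly ?p x = F x" for x
    unfolding F_def c_def by (rule one_minus_cube_mult_poly_partial_poly_square)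
  have pos_nonneg: "x \<ge> 0 \<Longrightarrow> poly ?p x > 0" for x
    by (rule poly_partial_poly_pos) auto
  show ?thesis
  proof (cases "even n")
    case True
    have "F x > 0" if x: "x < 0" for x
    proof -
      have pow: "x ^ (n + 1) < 0" "x ^ (n + 2) > 0" "x ^ (n + 3) < 0"
        unfolding power_less_zero_eq zero_less_power_eq using x True by simp_all
      have "c * x ^ (n + 2) \<ge> 0" "(real n + 1) ^ 2 * x ^ (n + 3) \<le> 0"
        using mult_nonneg_nonneg[OF less_imp_le[OF c_pos] less_imp_le[OF pow(2)]]
          mult_nonneg_nonpos[OF zero_le_power2 less_imp_le[OF pow(3)]] by simp_all
      moreover have "1 + x - (real n + 2) ^ 2 * x ^ (n + 1) > 0"
      proof (cases "x \<ge> -1")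
        case True
        moreover have "(real n + 2) ^ 2 * x ^ (n + 1) < 0"
          using mult_pos_neg[OF _ pow(1)] by simp
        ultimately show ?thesis by linarith
      next
        case False
        have "x ^ n \<ge> 1"
          using False \<open>even n\<close> one_le_power[of "\<bar>x\<bar>" n] by (simp add: power_even_abs)
        then have "x ^ (n + 1) \<le> x" using x by (simp add: mult_le_cancel_left1 mult.commute)
        have four_le: "4 \<le> (real n + 2) ^ 2"
          using power_mono[of 2 "real n + 2" 2] by simp
        have "(real n + 2) ^ 2 * x ^ (n + 1) \<le> (real n + 2) ^ 2 * x"
          using \<open>x ^ (n + 1) \<le> x\<close> by (simp add: mult_left_mono)
        also have "\<dots> \<le> 4 * x"
          using four_le x by (simp add: mult_right_mono_neg)
        finally show ?thesis using False by linarith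
      qed
      ultimately show ?thesis unfolding F_def by linarith
    qed
    then show ?thesis using real_root_count_eq_0_by_multiplier[OF F pos_nonneg] True by simp
  next
    case False
    define F' where "F' x = 1 - (real n + 2) ^ 2 * (real n + 1) * x ^ n
        + c * (real n + 2) * x ^ (n + 1) - (real n + 1) ^ 2 * (real n + 3) * x ^ (n + 2)"
      for x :: real
    have F': "(F has_real_derivative F' x) (at x)" for x
      unfolding F_def[abs_def] F'_def
      by (rule derivative_eq_intros refl)+ (simp add: algebra_simps)
    have "F' x > 0" if "x < 0" for x
    proof -
      have pow: "x ^ n < 0" "x ^ (n + 1) > 0" "x ^ (n + 2) < 0"
        unfolding power_less_zero_eq zero_less_power_eq using that False by simp_all
      then have "(real n + 2) ^ 2 * (real n + 1) * x ^ n < 0"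
        "c * (real n + 2) * x ^ (n + 1) > 0"
        "(real n + 1) ^ 2 * (real n + 3) * x ^ (n + 2) < 0"
        using c_pos by (simp_all add: mult_pos_neg)
      then show ?thesis unfolding F'_def by linarith
    qed
    moreover have "F (-1) < 0"
    proof -
      have "F (-1) = - ((real n + 2) ^ 2) - c - (real n + 1) ^ 2"
        using False unfolding F_def by simp
      then show ?thesis using c_pos zero_le_power2[of "real n + 1"] zero_le_power2[of "real n + 2"]
        by linarith
    qed
    ultimately show ?thesis
      using real_root_count_eq_1_by_multiplier[OF F F' _ pos_nonneg] False
      by (simp add: odd_iff_mod_2_eq_one)
  qed
qed

theorem mainTheorem5:
  shows "\<forall>n::nat.
     real_root_count (partial_poly (\<lambda>i. real i + 1) n) = n mod 2 \<and>
     real_root_count (partial_poly (\<lambda>i. (real i + 1)^2) n) = n mod 2"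
  using real_root_count_partial_poly_linear real_root_count_partial_poly_square by blast

end
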